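(* Suppose Assumption A holds with $\beta,\gamma\in(0,\infty)$. Fix $\mu>0$ and $\sigma\in\mathcal X$, let $\pi^{\mu,\sigma}$ be a perturbed equilibrium, and let $0<\eta\le\frac{2\mu\gamma\rho^2}{\mu^2\gamma\rho^2(\gamma+2\beta)+8L^2}$. Let $(\pi^t)_{t\ge0}$ be any sequence in $\mathcal X$ such that for all $t\ge0$, $$D_\psi(\pi^{\mu,\sigma},\pi^{t+1})-D_\psi(\pi^{\mu,\sigma},\pi^t)+D_\psi(\pi^{t+1},\pi^t)\le\eta\sum_{i=1}^N\langle\nabla_{\pi_i}v_i(\pi^t)-\mu\nabla_{\pi_i}G(\pi_i^t,\sigma_i),\pi_i^{t+1}-\pi_i^{\mu,\sigma}\rangle.$$ Then for all $t\ge0$, $$D_\psi(\pi^{\mu,\sigma},\pi^t)\le D_\psi(\pi^{\mu,\sigma},\pi^0)\Big(1-\frac{\eta\mu\gamma}2\Big)^t.$$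
   Context: Game. Let $N\ge1$. For each $i\in[N]$, $\mathcal X_i\subseteq\mathbb R^{d_i}$ is a nonempty compact convex set, and $\mathcal X=\prod_i\mathcal X_i$. Each $v_i:\mathcal X\to\mathbb R$ is differentiable, with block gradient $\nabla_{\pi_i}v_i$. The norm is Euclidean, with $\|\pi\|^2=\sum_i\|\pi_i\|^2$. The game is monotone: $\sum_i\langle\nabla_{\pi_i}v_i(\pi)-\nabla_{\pi_i}v_i(\pi'),\pi_i-\pi_i'\rangle\le0$. The game is $L$-smooth: $\sum_i\|\nabla_{\pi_i}v_i(\pi)-\nabla_{\pi_i}v_i(\pi')\|^2\le L^2\|\pi-\pi'\|^2$. Regularizer. $\psi:\mathcal X_i\to\mathbb R$ is differentiable and $\rho$-strongly convex with respect to $\|\cdot\|$. Bregman divergence: $D_\psi(x,y)=\psi(x)-\psi(y)-\langle\nabla\psi(y),x-y\rangle$, and $D_\psi(\pi,\pi')=\sum_iD_\psi(\pi_i,\pi_i')$. Perturbation. $G:\mathcal X_i\times\mathcal X_i\to[0,\infty)$ is differentiable in its first argument, with gradient $\nabla_{\pi_i}G$ in that argument. $G(\cdot,\sigma_i)$ is strictly convex with minimum $0$ at $\sigma_i$. For $\mu>0$ and $\sigma\in\mathcal X$, $\pi^{\mu,\sigma}$ is a profile with $\pi_i^{\mu,\sigma}\in\arg\max_{\pi_i}\{v_i(\pi_i,\pi^{\mu,\sigma}_{-i})-\mu G(\pi_i,\sigma_i)\}$ for all $i$. Assumption A: for all $\sigma_i,\pi_i,\pi_i'\in\mathcal X_i$,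 $$\gamma D_\psi(\pi_i',\pi_i)\le G(\pi_i',\sigma_i)-G(\pi_i,\sigma_i)-\langle\nabla_{\pi_i}G(\pi_i,\sigma_i),\pi_i'-\pi_i\rangle\le\beta D_\psi(\pi_i',\pi_i).$$ *)

theory Defs
  imports "HOL-Analysis.Analysis"
begin

definition strongly_convex_on :: "real \<Rightarrow> 'a::real_normed_vector set \<Rightarrow> ('a \<Rightarrow> real) \<Rightarrow> bool" where
  "strongly_convex_on \<rho> S f \<longleftrightarrow>
     (\<forall>x\<in>S. \<forall>y\<in>S. \<forall>t::real. 0 \<le> t \<and> t \<le> 1 \<longrightarrow>
        f ((1 - t) *\<^sub>R x + t *\<^sub>R y)
          \<le> (1 - t) * f x + t * f y - \<rho> / 2 * t * (1 - t) * (norm (x - y))\<^sup>2)"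

definition strict_convex_on :: "'a::real_vector set \<Rightarrow> ('a \<Rightarrow> real) \<Rightarrow> bool" where
  "strict_convex_on S f \<longleftrightarrow>
     (\<forall>x\<in>S. \<forall>y\<in>S. x \<noteq> y \<longrightarrow> (\<forall>t::real. 0 < t \<and> t < 1 \<longrightarrow>
        f ((1 - t) *\<^sub>R x + t *\<^sub>R y) < (1 - t) * f x + t * f y))"

definition bregman :: "('a::real_inner \<Rightarrow> real) \<Rightarrow> ('a \<Rightarrow> 'a) \<Rightarrow> 'a \<Rightarrow> 'a \<Rightarrow> real" where
  "bregman psi dpsi x y = psi x - psi y - inner (dpsi y) (x - y)"

definition bregman_prof :: "('a::real_inner \<Rightarrow> real) \<Rightarrow> ('a \<Rightarrow> 'a) \<Rightarrow> nat \<Rightarrow> (nat \<Rightarrow> 'a) \<Rightarrow> (nat \<Rightarrow> 'a) \<Rightarrow> real" where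
  "bregman_prof psi dpsi N p q = (\<Sum>i<N. bregman psi dpsi (p i) (q i))"

end

theory Submission imports Defs begin

text \<open>At the perturbed equilibrium \<open>\<pi>\<^sup>*\<close> the perturbed gradient satisfies the first-order
  variational inequality. Compare it with the perturbed gradient at the iterate \<open>\<pi>\<^sub>t\<close>:
  monotonicity removes the game part of the difference, the lower bound of Assumption A turns
  the perturbation part into \<open>-\<mu>\<gamma> D(\<pi>\<^sup>*, \<pi>\<^sub>t)\<close> (the upper bound costs \<open>\<mu>\<beta> D(\<pi>\<^sub>t\<^sub>+\<^sub>1, \<pi>\<^sub>t)\<close>),
  and Young's inequality splits the remaining cross term into pieces controlled, through
  \<open>L\<close>-smoothness and strong convexity of \<open>\<psi>\<close>, by \<open>D(\<pi>\<^sup>*, \<pi>\<^sub>t)\<close> and \<open>D(\<pi>\<^sub>t\<^sub>+\<^sub>1, \<pi>\<^sub>t)\<close>.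
  For admissible step sizes all \<open>D(\<pi>\<^sub>t\<^sub>+\<^sub>1, \<pi>\<^sub>t)\<close> terms are absorbed by the left-hand side of
  the update inequality, leaving the contraction
  \<open>D(\<pi>\<^sup>*, \<pi>\<^sub>t\<^sub>+\<^sub>1) \<le> (1 - \<eta>\<mu>\<gamma>/2) D(\<pi>\<^sup>*, \<pi>\<^sub>t)\<close>.\<close>

lemma has_derivative_directional_quotient_tendsto:
  fixes f :: "'a::real_normed_vector \<Rightarrow> real"
  assumes df: "(f has_derivative f') (at y within S)"
    and S: "convex S" "x \<in> S" "y \<in> S"
  shows "((\<lambda>t. (f (y + t *\<^sub>R (x - y)) - f y) / t) \<longlongrightarrow> f' (x - y)) (at_right 0)"
proof -
  let ?g = "\<lambda>t::real. y + t *\<^sub>R (x - y)"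
  have dg: "(?g has_derivative (\<lambda>t. t *\<^sub>R (x - y))) (at 0 within {0..1})"
    by (auto intro!: derivative_eq_intros)
  have "?g ` {0..1} \<subseteq> S"
  proof
    fix z assume "z \<in> ?g ` {0..1}"
    then obtain t where t: "t \<in> {0..1}" "z = (1 - t) *\<^sub>R y + t *\<^sub>R x"
      by (auto simp: algebra_simps)
    then show "z \<in> S" using S by (auto intro: convexD)
  qed
  then have "(f has_derivative f') (at (?g 0) within ?g ` {0..1})"
    using has_derivative_subset[OF df] by simp
  from diff_chain_within[OF dg this]
  have "((f \<circ> ?g) has_field_derivative f' (x - y)) (at 0 within {0..1})"
    using linear_scale[OF has_derivative_linear[OF df]]
    by (simp add: has_field_derivative_def o_def mult.commute[of _ "f' (x - y)"])
  then show ?thesis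
    by (simp add: has_field_derivative_iff at_within_Icc_at_right)
qed

lemma has_derivative_max_on_convex_nonpos:
  fixes f :: "'a::real_normed_vector \<Rightarrow> real"
  assumes df: "(f has_derivative f') (at y within S)"
    and S: "convex S" "x \<in> S" "y \<in> S"
    and max: "\<And>z. z \<in> S \<Longrightarrow> f z \<le> f y"
  shows "f' (x - y) \<le> 0"
proof (rule tendsto_le[OF trivial_limit_at_right_real tendsto_const
      has_derivative_directional_quotient_tendsto[OF df S]])
  show "\<forall>\<^sub>F t in at_right 0. (f (y + t *\<^sub>R (x - y)) - f y) / t \<le> 0"
    unfolding eventually_at_right_field
  proof (intro exI[of _ 1] conjI allI impI)
    fix t :: real assume t: "0 < t" "t < 1"
    then have "y + t *\<^sub>R (x - y) \<in> S"
      using convexD[OF S(1) S(3) S(2), of "1 - t" t] by (simp add: algebra_simps)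
    then show "(f (y + t *\<^sub>R (x - y)) - f y) / t \<le> 0"
      using max t by (simp add: divide_le_0_iff)
  qed simp
qed

lemma bregman_ge_strongly_convex:
  fixes psi :: "'a::real_inner \<Rightarrow> real"
  assumes sc: "strongly_convex_on \<rho> S psi"
    and d: "(psi has_derivative (\<lambda>h. inner (dpsi y) h)) (at y within S)"
    and S: "convex S" "x \<in> S" "y \<in> S"
  shows "\<rho> / 2 * (norm (x - y))\<^sup>2 \<le> bregman psi dpsi x y"
proof -
  let ?bound = "\<lambda>t. psi x - psi y - \<rho> / 2 * (1 - t) * (norm (x - y))\<^sup>2"
  have "\<forall>\<^sub>F t in at_right 0. (psi (y + t *\<^sub>R (x - y)) - psi y) / t \<le> ?bound t"
    unfolding eventually_at_right_field
  proof (intro exI[of _ 1] conjI allI impI)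
    fix t :: real assume t: "0 < t" "t < 1"
    have "psi ((1 - t) *\<^sub>R y + t *\<^sub>R x)
        \<le> (1 - t) * psi y + t * psi x - \<rho> / 2 * t * (1 - t) * (norm (y - x))\<^sup>2"
      using sc S t unfolding strongly_convex_on_def by auto
    then have "psi (y + t *\<^sub>R (x - y)) - psi y \<le> t * ?bound t"
      by (simp add: algebra_simps norm_minus_commute)
    then show "(psi (y + t *\<^sub>R (x - y)) - psi y) / t \<le> ?bound t"
      using t by (simp add: divide_le_eq mult.commute)
  qed simp
  moreover have "(?bound \<longlongrightarrow> ?bound 0) (at_right 0)"
    by (intro tendsto_intros)
  ultimately have "inner (dpsi y) (x - y) \<le> ?bound 0"
    using tendsto_le[OF trivial_limit_at_right_real _
        has_derivative_directional_quotient_tendsto[OF d S]] by blast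
  then show ?thesis unfolding bregman_def by simp
qed

lemma inner_le_young:
  fixes a b :: "'a::real_inner"
  assumes c: "c > 0"
  shows "inner a b \<le> c / 2 * (norm a)\<^sup>2 + 1 / (2 * c) * (norm b)\<^sup>2"
proof -
  have "0 \<le> (norm (c *\<^sub>R a - b))\<^sup>2" by simp
  also have "\<dots> = c\<^sup>2 * (norm a)\<^sup>2 - 2 * c * inner a b + (norm b)\<^sup>2"
    unfolding power2_norm_eq_inner
    by (simp add: inner_diff_left inner_diff_right power2_eq_square inner_commute algebra_simps)
  finally show ?thesis
    using c by (simp add: field_simps power2_eq_square)
qed

lemma first_order_condition_perturbed_best_response:
  fixes f Gs :: "'a::real_inner \<Rightarrow> real"
  assumes df: "(f has_derivative (\<lambda>h. inner g h)) (at s within S)"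
    and dG: "(Gs has_derivative (\<lambda>h. inner dg h)) (at s within S)"
    and S: "convex S" "x \<in> S" "s \<in> S"
    and best: "\<And>z. z \<in> S \<Longrightarrow> f z - \<mu> * Gs z \<le> f s - \<mu> * Gs s"
  shows "inner (g - \<mu> *\<^sub>R dg) (x - s) \<le> 0"
proof -
  have "((\<lambda>z. f z - \<mu> * Gs z) has_derivative (\<lambda>h. inner g h - \<mu> * inner dg h)) (at s within S)"
    using df dG by (auto intro!: derivative_eq_intros)
  from has_derivative_max_on_convex_nonpos[OF this S best]
  show ?thesis by (simp add: inner_diff_left)
qed

text \<open>The one-player estimate: \<open>p\<close> is the current iterate, \<open>q\<close> the next one and \<open>s\<close> the
  equilibrium, with \<open>gp, gs\<close> the game gradients and \<open>dp, ds\<close> the gradients of the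
  perturbation at \<open>p\<close> and \<open>s\<close>.\<close>

lemma inner_perturbed_gradient_le:
  fixes gp gs dp ds p q s :: "'a::real_inner"
  assumes lower: "\<gamma> * Bsp \<le> Gs - Gp - inner dp (s - p)"
    and convex: "0 \<le> Gq - Gs - inner ds (q - s)"
    and upper: "Gq - Gp - inner dp (q - p) \<le> \<beta> * Bqp"
    and c: "c > 0" and mu: "\<mu> \<ge> 0"
  shows "inner (gp - \<mu> *\<^sub>R dp) (q - s)
    \<le> inner (gp - gs) (p - s) + c / 2 * (norm (gp - gs))\<^sup>2 + 1 / (2 * c) * (norm (q - p))\<^sup>2
       - \<mu> * \<gamma> * Bsp + \<mu> * \<beta> * Bqp + inner (gs - \<mu> *\<^sub>R ds) (q - s)"
proof -
  have split: "inner (gp - \<mu> *\<^sub>R dp) (q - s) = inner (gp - gs) (p - s) + inner (gp - gs) (q - p)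
      - \<mu> * (inner dp (q - s) - inner ds (q - s)) + inner (gs - \<mu> *\<^sub>R ds) (q - s)"
    by (simp add: inner_diff_left inner_diff_right algebra_simps)
  have "inner dp (q - s) - inner ds (q - s)
      = (Gs - Gp - inner dp (s - p)) + (Gq - Gs - inner ds (q - s)) - (Gq - Gp - inner dp (q - p))"
    by (simp add: inner_diff_left inner_diff_right algebra_simps)
  with lower convex upper
  have "\<mu> * (\<gamma> * Bsp - \<beta> * Bqp) \<le> \<mu> * (inner dp (q - s) - inner ds (q - s))"
    using mu by (intro mult_left_mono) auto
  with split inner_le_young[OF c, of "gp - gs" "q - p"] show ?thesis
    by (simp add: algebra_simps)
qed

lemma sum_sq_norm_le_bregman_prof:
  assumes rho: "\<rho> > 0"
    and sc: "\<And>i x y. i < N \<Longrightarrow> x \<in> X i \<Longrightarrow> y \<in> X i \<Longrightarrow>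
        \<rho> / 2 * (norm (x - y))\<^sup>2 \<le> bregman psi dpsi x y"
    and p: "p \<in> Pi\<^sub>E {..<N} X" and q: "q \<in> Pi\<^sub>E {..<N} X"
  shows "(\<Sum>i<N. (norm (p i - q i))\<^sup>2) \<le> 2 / \<rho> * bregman_prof psi dpsi N p q"
  unfolding bregman_prof_def sum_distrib_left
proof (rule sum_mono)
  fix i assume "i \<in> {..<N}"
  with p q have "\<rho> / 2 * (norm (p i - q i))\<^sup>2 \<le> bregman psi dpsi (p i) (q i)"
    by (intro sc) auto
  then show "(norm (p i - q i))\<^sup>2 \<le> 2 / \<rho> * bregman psi dpsi (p i) (q i)"
    using rho by (simp add: field_simps)
qed

lemma bregman_prof_nonneg:
  assumes rho: "\<rho> \<ge> 0"
    and sc: "\<And>i x y. i < N \<Longrightarrow> x \<in> X i \<Longrightarrow> y \<in> X i \<Longrightarrow>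
        \<rho> / 2 * (norm (x - y))\<^sup>2 \<le> bregman psi dpsi x y"
    and p: "p \<in> Pi\<^sub>E {..<N} X" and q: "q \<in> Pi\<^sub>E {..<N} X"
  shows "0 \<le> bregman_prof psi dpsi N p q"
  unfolding bregman_prof_def
proof (rule sum_nonneg)
  fix i assume "i \<in> {..<N}"
  with p q have "\<rho> / 2 * (norm (p i - q i))\<^sup>2 \<le> bregman psi dpsi (p i) (q i)"
    by (intro sc) auto
  moreover have "0 \<le> \<rho> / 2 * (norm (p i - q i))\<^sup>2" using rho by simp
  ultimately show "0 \<le> bregman psi dpsi (p i) (q i)" by linarith
qed

lemma sum_inner_perturbed_gradient_le:
  fixes p q s \<sigma> :: "nat \<Rightarrow> 'a::real_inner" and gv :: "nat \<Rightarrow> (nat \<Rightarrow> 'a) \<Rightarrow> 'a"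
  assumes rho: "\<rho> > 0" and mu: "\<mu> \<ge> 0" and gamma: "\<gamma> \<ge> 0" and c: "c > 0"
    and p: "p \<in> Pi\<^sub>E {..<N} X" and q: "q \<in> Pi\<^sub>E {..<N} X" and s: "s \<in> Pi\<^sub>E {..<N} X"
    and sc: "\<And>i x y. i < N \<Longrightarrow> x \<in> X i \<Longrightarrow> y \<in> X i \<Longrightarrow>
        \<rho> / 2 * (norm (x - y))\<^sup>2 \<le> bregman psi dpsi x y"
    and A: "\<And>i x x'. i < N \<Longrightarrow> x \<in> X i \<Longrightarrow> x' \<in> X i \<Longrightarrow>
        \<gamma> * bregman psi dpsi x' x \<le> G x' (\<sigma> i) - G x (\<sigma> i) - inner (dG x (\<sigma> i)) (x' - x)
        \<and> G x' (\<sigma> i) - G x (\<sigma> i) - inner (dG x (\<sigma> i)) (x' - x) \<le> \<beta> * bregman psi dpsi x' x"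
    and monotone: "(\<Sum>i<N. inner (gv i p - gv i s) (p i - s i)) \<le> 0"
    and smooth: "(\<Sum>i<N. (norm (gv i p - gv i s))\<^sup>2) \<le> L\<^sup>2 * (\<Sum>i<N. (norm (p i - s i))\<^sup>2)"
    and vi: "\<And>i. i < N \<Longrightarrow> inner (gv i s - \<mu> *\<^sub>R dG (s i) (\<sigma> i)) (q i - s i) \<le> 0"
  shows "(\<Sum>i<N. inner (gv i p - \<mu> *\<^sub>R dG (p i) (\<sigma> i)) (q i - s i))
    \<le> (c * L\<^sup>2 / \<rho> - \<mu> * \<gamma>) * bregman_prof psi dpsi N s p
       + (1 / (c * \<rho>) + \<mu> * \<beta>) * bregman_prof psi dpsi N q p"
proof -
  let ?B = "bregman psi dpsi"
  let ?D = "bregman_prof psi dpsi N s p" and ?E = "bregman_prof psi dpsi N q p"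
  let ?Gg = "\<Sum>i<N. (norm (gv i p - gv i s))\<^sup>2" and ?Qp = "\<Sum>i<N. (norm (q i - p i))\<^sup>2"
  have mem: "p i \<in> X i" "q i \<in> X i" "s i \<in> X i" if "i < N" for i
    using p q s that by auto
  have per_player: "inner (gv i p - \<mu> *\<^sub>R dG (p i) (\<sigma> i)) (q i - s i)
      \<le> inner (gv i p - gv i s) (p i - s i)
         + c / 2 * (norm (gv i p - gv i s))\<^sup>2 + 1 / (2 * c) * (norm (q i - p i))\<^sup>2
         - \<mu> * \<gamma> * ?B (s i) (p i) + \<mu> * \<beta> * ?B (q i) (p i)
         + inner (gv i s - \<mu> *\<^sub>R dG (s i) (\<sigma> i)) (q i - s i)" if i: "i < N" for i
  proof (rule inner_perturbed_gradient_le[OF _ _ _ c mu])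
    have "0 \<le> \<rho> / 2 * (norm (q i - s i))\<^sup>2" using rho by simp
    then have "0 \<le> \<gamma> * ?B (q i) (s i)"
      using order_trans[OF _ sc[OF i mem(2,3)[OF i]]] gamma by simp
    then show "0 \<le> G (q i) (\<sigma> i) - G (s i) (\<sigma> i) - inner (dG (s i) (\<sigma> i)) (q i - s i)"
      using A[OF i mem(3,2)[OF i]] by linarith
  qed (use A[OF i mem(1,3)[OF i]] A[OF i mem(1,2)[OF i]] in auto)
  have "(\<Sum>i<N. inner (gv i p - \<mu> *\<^sub>R dG (p i) (\<sigma> i)) (q i - s i))
      \<le> (\<Sum>i<N. inner (gv i p - gv i s) (p i - s i)) + c / 2 * ?Gg + 1 / (2 * c) * ?Qp
         - \<mu> * \<gamma> * ?D + \<mu> * \<beta> * ?E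
         + (\<Sum>i<N. inner (gv i s - \<mu> *\<^sub>R dG (s i) (\<sigma> i)) (q i - s i))"
    using sum_mono[of "{..<N}", OF per_player]
    by (simp add: bregman_prof_def sum.distrib sum_subtractf sum_distrib_left)
  also have "\<dots> \<le> c / 2 * (L\<^sup>2 * (2 / \<rho> * ?D)) + 1 / (2 * c) * (2 / \<rho> * ?E)
      - \<mu> * \<gamma> * ?D + \<mu> * \<beta> * ?E"
  proof -
    have "(\<Sum>i<N. (norm (p i - s i))\<^sup>2) \<le> 2 / \<rho> * ?D"
      using sum_sq_norm_le_bregman_prof[OF rho sc s p] by (simp add: norm_minus_commute)
    then have "?Gg \<le> L\<^sup>2 * (2 / \<rho> * ?D)"
      using smooth mult_left_mono[of _ _ "L\<^sup>2"] by fastforce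
    then have "c / 2 * ?Gg \<le> c / 2 * (L\<^sup>2 * (2 / \<rho> * ?D))"
      using c by (intro mult_left_mono) auto
    moreover have "?Qp \<le> 2 / \<rho> * ?E"
      by (rule sum_sq_norm_le_bregman_prof[OF rho sc q p])
    then have "1 / (2 * c) * ?Qp \<le> 1 / (2 * c) * (2 / \<rho> * ?E)"
      using c by (intro mult_left_mono) auto
    moreover have "(\<Sum>i<N. inner (gv i s - \<mu> *\<^sub>R dG (s i) (\<sigma> i)) (q i - s i)) \<le> 0"
      using vi by (intro sum_nonpos) auto
    ultimately show ?thesis using monotone by linarith
  qed
  also have "\<dots> = (c * L\<^sup>2 / \<rho> - \<mu> * \<gamma>) * ?D + (1 / (c * \<rho>) + \<mu> * \<beta>) * ?E"
    using c rho by (simp add: field_simps)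
  finally show ?thesis .
qed

text \<open>\<open>c\<close> is the weight of the Young split of the cross term; the last conclusion keeps the
  contraction factor \<open>1 - \<eta>\<mu>\<gamma>/2\<close> nonnegative.\<close>

lemma admissible_step_size:
  fixes \<rho> \<mu> \<gamma> \<beta> \<eta> L :: real
  assumes pos: "\<rho> > 0" "\<mu> > 0" "\<gamma> > 0" "\<beta> \<ge> 0" "\<eta> \<ge> 0"
    and eta: "\<eta> \<le> 2 * \<mu> * \<gamma> * \<rho>\<^sup>2 / (\<mu>\<^sup>2 * \<gamma> * \<rho>\<^sup>2 * (\<gamma> + 2 * \<beta>) + 8 * L\<^sup>2)"
  obtains c where "c > 0" "c * L\<^sup>2 / \<rho> \<le> \<mu> * \<gamma> / 2"
    "\<eta> * (1 / (c * \<rho>) + \<mu> * \<beta>) \<le> 1" "\<eta> * \<mu> * \<gamma> / 2 \<le> 1"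
proof -
  define Q where "Q = \<mu>\<^sup>2 * \<gamma>\<^sup>2 * \<rho>\<^sup>2 + 8 * L\<^sup>2"
  define c where "c = 2 * \<mu> * \<gamma> * \<rho> / Q"
  have Q: "Q > 0" "\<mu>\<^sup>2 * \<gamma>\<^sup>2 * \<rho>\<^sup>2 \<le> Q" "4 * L\<^sup>2 \<le> Q"
    unfolding Q_def using pos by (auto simp: add_pos_nonneg)
  have c: "c > 0" unfolding c_def using Q pos by simp
  have "c * L\<^sup>2 / \<rho> = 2 * \<mu> * \<gamma> * L\<^sup>2 / Q"
    unfolding c_def using pos by simp
  also have "\<dots> \<le> \<mu> * \<gamma> / 2"
    using Q pos by (simp add: divide_le_eq algebra_simps)
  finally have young: "c * L\<^sup>2 / \<rho> \<le> \<mu> * \<gamma> / 2" .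
  have inv: "1 / (c * \<rho>) = Q / (2 * \<mu> * \<gamma> * \<rho>\<^sup>2)"
    unfolding c_def using pos Q by (simp add: field_simps power2_eq_square)
  have "1 / (c * \<rho>) + \<mu> * \<beta>
      = (\<mu>\<^sup>2 * \<gamma> * \<rho>\<^sup>2 * (\<gamma> + 2 * \<beta>) + 8 * L\<^sup>2) / (2 * \<mu> * \<gamma> * \<rho>\<^sup>2)"
    unfolding inv Q_def using pos by (simp add: field_simps power2_eq_square)
  with eta pos have absorb: "\<eta> * (1 / (c * \<rho>) + \<mu> * \<beta>) \<le> 1"
    by (simp add: le_divide_eq divide_le_eq mult.commute add_pos_nonneg)
  have "\<mu> * \<gamma> / 2 \<le> 1 / (c * \<rho>)"
    unfolding inv using Q pos by (simp add: field_simps power2_eq_square)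
  then have "\<mu> * \<gamma> / 2 \<le> 1 / (c * \<rho>) + \<mu> * \<beta>"
    using pos by (simp add: add_increasing2)
  then have "\<eta> * (\<mu> * \<gamma> / 2) \<le> \<eta> * (1 / (c * \<rho>) + \<mu> * \<beta>)"
    using pos by (intro mult_left_mono) auto
  with absorb have "\<eta> * \<mu> * \<gamma> / 2 \<le> 1" by linarith
  with c young absorb that show ?thesis by blast
qed

lemma update_inequality_contraction:
  fixes D D' E S \<eta> a b \<kappa> :: real
  assumes update: "D' - D + E \<le> \<eta> * S" and S: "S \<le> a * D + b * E"
    and "\<eta> \<ge> 0" "\<eta> * a \<le> - \<kappa>" "\<eta> * b \<le> 1" "D \<ge> 0" "E \<ge> 0"
  shows "D' \<le> (1 - \<kappa>) * D"
proof -
  have "\<eta> * S \<le> (\<eta> * a) * D + (\<eta> * b) * E"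
    using mult_left_mono[OF S \<open>\<eta> \<ge> 0\<close>] by (simp add: ring_distribs)
  also have "\<dots> \<le> - \<kappa> * D + 1 * E"
    using assms(4-) by (intro add_mono mult_right_mono) auto
  finally show ?thesis using update by (simp add: algebra_simps)
qed

lemma geometric_decay:
  fixes a :: "nat \<Rightarrow> real"
  assumes "r \<ge> 0" and "\<And>t. a (Suc t) \<le> r * a t"
  shows "a t \<le> a 0 * r ^ t"
proof (induction t)
  case (Suc t)
  have "a (Suc t) \<le> r * a t" by (rule assms(2))
  also have "\<dots> \<le> r * (a 0 * r ^ t)" using Suc assms(1) by (rule mult_left_mono)
  finally show ?case by (simp add: algebra_simps)
qed simp

theorem lemma2:
  fixes N :: nat
    and X :: "nat \<Rightarrow> 'a::euclidean_space set"
    and v :: "nat \<Rightarrow> (nat \<Rightarrow> 'a) \<Rightarrow> real"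
    and gv :: "nat \<Rightarrow> (nat \<Rightarrow> 'a) \<Rightarrow> 'a"
    and L \<rho> \<gamma> \<beta> \<mu> \<eta> :: real
    and psi :: "'a \<Rightarrow> real" and dpsi :: "'a \<Rightarrow> 'a"
    and G :: "'a \<Rightarrow> 'a \<Rightarrow> real" and dG :: "'a \<Rightarrow> 'a \<Rightarrow> 'a"
    and \<sigma> \<pi>s :: "nat \<Rightarrow> 'a"
    and \<pi> :: "nat \<Rightarrow> nat \<Rightarrow> 'a"
  assumes N: "N \<ge> 1"
    and X_ne: "\<And>i. i < N \<Longrightarrow> X i \<noteq> {}"
    and X_compact: "\<And>i. i < N \<Longrightarrow> compact (X i)"
    and X_convex: "\<And>i. i < N \<Longrightarrow> convex (X i)"
    \<comment> \<open>gv i p is the block gradient of v i with respect to the i-th block, at profiles p in X\<close>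
    and v_grad: "\<And>i p. i < N \<Longrightarrow> p \<in> Pi\<^sub>E {..<N} X \<Longrightarrow>
        ((\<lambda>x. v i (p(i := x))) has_derivative (\<lambda>h. inner (gv i p) h)) (at (p i) within X i)"
    and monotone: "\<And>p q. p \<in> Pi\<^sub>E {..<N} X \<Longrightarrow> q \<in> Pi\<^sub>E {..<N} X \<Longrightarrow>
        (\<Sum>i<N. inner (gv i p - gv i q) (p i - q i)) \<le> 0"
    and smooth: "\<And>p q. p \<in> Pi\<^sub>E {..<N} X \<Longrightarrow> q \<in> Pi\<^sub>E {..<N} X \<Longrightarrow>
        (\<Sum>i<N. (norm (gv i p - gv i q))\<^sup>2) \<le> L\<^sup>2 * (\<Sum>i<N. (norm (p i - q i))\<^sup>2)"
    and rho_pos: "\<rho> > 0"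
    and psi_grad: "\<And>i x. i < N \<Longrightarrow> x \<in> X i \<Longrightarrow>
        (psi has_derivative (\<lambda>h. inner (dpsi x) h)) (at x within X i)"
    and psi_sc: "\<And>i. i < N \<Longrightarrow> strongly_convex_on \<rho> (X i) psi"
    and G_nonneg: "\<And>i x s. i < N \<Longrightarrow> x \<in> X i \<Longrightarrow> s \<in> X i \<Longrightarrow> G x s \<ge> 0"
    and G_grad: "\<And>i x s. i < N \<Longrightarrow> x \<in> X i \<Longrightarrow> s \<in> X i \<Longrightarrow>
        ((\<lambda>y. G y s) has_derivative (\<lambda>h. inner (dG x s) h)) (at x within X i)"
    and G_strict: "\<And>i s. i < N \<Longrightarrow> s \<in> X i \<Longrightarrow> strict_convex_on (X i) (\<lambda>y. G y s)"
    and G_zero: "\<And>i s. i < N \<Longrightarrow> s \<in> X i \<Longrightarrow> G s s = 0"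
    \<comment> \<open>Assumption A\<close>
    and beta_pos: "\<beta> > 0" and gamma_pos: "\<gamma> > 0"
    and assmA: "\<And>i s x x'. i < N \<Longrightarrow> s \<in> X i \<Longrightarrow> x \<in> X i \<Longrightarrow> x' \<in> X i \<Longrightarrow>
        \<gamma> * bregman psi dpsi x' x \<le> G x' s - G x s - inner (dG x s) (x' - x)
        \<and> G x' s - G x s - inner (dG x s) (x' - x) \<le> \<beta> * bregman psi dpsi x' x"
    \<comment> \<open>perturbed equilibrium\<close>
    and mu_pos: "\<mu> > 0"
    and sigma: "\<sigma> \<in> Pi\<^sub>E {..<N} X"
    and pis: "\<pi>s \<in> Pi\<^sub>E {..<N} X"
    and pis_eq: "\<And>i x. i < N \<Longrightarrow> x \<in> X i \<Longrightarrow>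
        v i (\<pi>s(i := x)) - \<mu> * G x (\<sigma> i) \<le> v i \<pi>s - \<mu> * G (\<pi>s i) (\<sigma> i)"
    \<comment> \<open>step size\<close>
    and eta_pos: "\<eta> > 0"
    and eta_le: "\<eta> \<le> 2 * \<mu> * \<gamma> * \<rho>\<^sup>2 / (\<mu>\<^sup>2 * \<gamma> * \<rho>\<^sup>2 * (\<gamma> + 2 * \<beta>) + 8 * L\<^sup>2)"
    \<comment> \<open>the sequence\<close>
    and seq: "\<And>t. \<pi> t \<in> Pi\<^sub>E {..<N} X"
    and step: "\<And>t. bregman_prof psi dpsi N \<pi>s (\<pi> (Suc t)) - bregman_prof psi dpsi N \<pi>s (\<pi> t)
                   + bregman_prof psi dpsi N (\<pi> (Suc t)) (\<pi> t)
               \<le> \<eta> * (\<Sum>i<N. inner (gv i (\<pi> t) - \<mu> *\<^sub>R dG (\<pi> t i) (\<sigma> i)) (\<pi> (Suc t) i - \<pi>s i))"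
  shows "\<forall>t. bregman_prof psi dpsi N \<pi>s (\<pi> t)
           \<le> bregman_prof psi dpsi N \<pi>s (\<pi> 0) * (1 - \<eta> * \<mu> * \<gamma> / 2) ^ t"
proof -
  let ?D = "\<lambda>t. bregman_prof psi dpsi N \<pi>s (\<pi> t)"
  obtain c where c: "c > 0" "c * L\<^sup>2 / \<rho> \<le> \<mu> * \<gamma> / 2"
      "\<eta> * (1 / (c * \<rho>) + \<mu> * \<beta>) \<le> 1" "\<eta> * \<mu> * \<gamma> / 2 \<le> 1"
    using admissible_step_size[OF rho_pos mu_pos gamma_pos _ _ eta_le] beta_pos eta_pos by auto
  have sc: "\<And>i x y. i < N \<Longrightarrow> x \<in> X i \<Longrightarrow> y \<in> X i \<Longrightarrow>
      \<rho> / 2 * (norm (x - y))\<^sup>2 \<le> bregman psi dpsi x y"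
    using bregman_ge_strongly_convex psi_sc psi_grad X_convex by blast
  have vi: "inner (gv i \<pi>s - \<mu> *\<^sub>R dG (\<pi>s i) (\<sigma> i)) (x - \<pi>s i) \<le> 0"
    if i: "i < N" and x: "x \<in> X i" for i x
    using first_order_condition_perturbed_best_response[OF v_grad[OF i pis]
        G_grad[OF i _ _] X_convex[OF i] x, of "\<sigma> i" \<mu>] pis sigma pis_eq[OF i] i
    by (auto simp: PiE_iff)
  have "?D (Suc t) \<le> (1 - \<eta> * \<mu> * \<gamma> / 2) * ?D t" for t
  proof (rule update_inequality_contraction[OF step])
    show "(\<Sum>i<N. inner (gv i (\<pi> t) - \<mu> *\<^sub>R dG (\<pi> t i) (\<sigma> i)) (\<pi> (Suc t) i - \<pi>s i))
        \<le> (c * L\<^sup>2 / \<rho> - \<mu> * \<gamma>) * ?D t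
           + (1 / (c * \<rho>) + \<mu> * \<beta>) * bregman_prof psi dpsi N (\<pi> (Suc t)) (\<pi> t)"
      by (rule sum_inner_perturbed_gradient_le[where G = G and dG = dG, OF rho_pos _ _ c(1)
            seq seq pis sc _ monotone[OF seq pis] smooth[OF seq pis]])
        (use mu_pos gamma_pos assmA sigma vi seq in \<open>auto simp: PiE_iff\<close>)
    show "\<eta> * (c * L\<^sup>2 / \<rho> - \<mu> * \<gamma>) \<le> - (\<eta> * \<mu> * \<gamma> / 2)"
      using mult_left_mono[OF c(2), of \<eta>] eta_pos by (simp add: algebra_simps)
  qed (use c(3) eta_pos rho_pos bregman_prof_nonneg[OF _ sc] pis seq in auto)
  then show ?thesis
    using geometric_decay[of "1 - \<eta> * \<mu> * \<gamma> / 2" ?D] c(4) by simp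
qed

end
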